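(* Let $\bar{\boldsymbol{\theta}}_{\mathrm{init}}:=(\boldsymbol{I},\boldsymbol{I})$. For every constant $c\in(0,1)$, letting $T^-_c(\alpha)=\frac{1-c}{\lambda}\log\alpha$, it holds for all $(i,j)\in[d]\times[d]$ that $$\lim_{\alpha\to+\infty}\big[\boldsymbol{W}(\boldsymbol{\theta}(T^-_c(\alpha);\alpha\bar{\boldsymbol{\theta}}_{\mathrm{init}}))\big]_{ij}=\begin{cases}\boldsymbol{X}^*_{ij}&\text{if }(i,j)\in\Omega\text{ or }(j,i)\in\Omega,\\ 0&\text{otherwise.}\end{cases}$$
   Context: $\boldsymbol{X}^*\in\mathbb{R}^{d\times d}$ is a symmetric matrix and $\Omega\subseteq[d]\times[d]$ is the set of observed entries; the training data is $\{(\boldsymbol{x}_k,y_k)\}_{k=1}^n$ with $\boldsymbol{x}_k=(i_k,j_k)$ ranging over $\Omega$ and $y_k=\boldsymbol{X}^*_{i_kj_k}$. Parameters $\boldsymbol{\theta}=(\boldsymbol{U},\boldsymbol{V})$ with $\boldsymbol{U},\boldsymbol{V}\in\mathbb{R}^{d\times d}$, $\boldsymbol{W}(\boldsymbol{\theta}):=\boldsymbol{U}\boldsymbol{U}^\top-\boldsymbol{V}\boldsymbol{V}^\top$, and model output $f(\boldsymbol{\theta};(i,j))=[\boldsymbol{W}(\boldsymbol{\theta})]_{ij}$. The loss is $\mathcal{L}_\lambda(\boldsymbol{\theta})=\frac1n\sum_{k=1}^n(f(\boldsymbol{\theta};\boldsymbol{x}_k)-y_k)^2+\frac\lambda2(\|\boldsymbol{U}\|_F^2+\|\boldsymbol{V}\|_F^2)$,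 with weight decay $\lambda=\lambda(\alpha)=\Theta(\alpha^{-p})$ for a constant $p>0$. $\boldsymbol{\theta}(t;\boldsymbol{\theta}_0)$ is the gradient flow $\frac{d\boldsymbol{\theta}}{dt}=-\nabla\mathcal{L}_\lambda(\boldsymbol{\theta})$ from $\boldsymbol{\theta}_0$; the initialization is $\alpha\bar{\boldsymbol{\theta}}_{\mathrm{init}}=(\alpha\boldsymbol{I},\alpha\boldsymbol{I})$. *)

theory Defs
  imports "HOL-Analysis.Analysis" "HOL-Library.Landau_Symbols"
begin

type_synonym 'n params = "(real^'n^'n) \<times> (real^'n^'n)"

definition Wmat :: "'n::finite params \<Rightarrow> real^'n^'n" where
  "Wmat \<theta> = fst \<theta> ** transpose (fst \<theta>) - snd \<theta> ** transpose (snd \<theta>)"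

definition frob_sq :: "real^'n::finite^'n \<Rightarrow> real" where
  "frob_sq A = (\<Sum>i\<in>UNIV. \<Sum>j\<in>UNIV. (A $ i $ j)^2)"

text \<open>Loss: the training set consists of exactly the observed entries Omega (n = card Omega).\<close>
definition loss :: "real^'n::finite^'n \<Rightarrow> ('n \<times> 'n) set \<Rightarrow> real \<Rightarrow> 'n params \<Rightarrow> real" where
  "loss Xs \<Omega> lam \<theta> =
     (1 / real (card \<Omega>)) * (\<Sum>(i,j)\<in>\<Omega>. (Wmat \<theta> $ i $ j - Xs $ i $ j)^2)
     + lam / 2 * (frob_sq (fst \<theta>) + frob_sq (snd \<theta>))"

definition is_gradient_flow :: "('a::euclidean_space \<Rightarrow> real) \<Rightarrow> 'a \<Rightarrow> (real \<Rightarrow> 'a) \<Rightarrow> bool" where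
  "is_gradient_flow L \<theta>0 \<theta> \<longleftrightarrow>
     \<theta> 0 = \<theta>0 \<and>
     (\<forall>t\<ge>0. \<exists>g. (L has_derivative (\<lambda>h. g \<bullet> h)) (at (\<theta> t)) \<and>
                  (\<theta> has_vector_derivative (- g)) (at t within {0..}))"

end

theory Submission
  imports Defs "HOL-Real_Asymp.Real_Asymp"
begin

text \<open>
  Rescale the factors to \<open>Z = exp(\<lambda>t) U / \<alpha>\<close> and \<open>Y = exp(\<lambda>t) V / \<alpha>\<close>. This removes the
  weight decay from the flow: \<open>Z' = - G Z\<close> and \<open>Y' = G Y\<close>, where \<open>G\<close> is the (symmetric) gradient
  of the data term with respect to \<open>W\<close>. Hence \<open>Z\<^sup>T Y = I\<close> is conserved, \<open>W = \<beta> (Z Z\<^sup>T - Y Y\<^sup>T)\<close>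
  with \<open>\<beta> = \<alpha>\<^sup>2 exp(-2\<lambda>t)\<close>, and \<open>Z Z\<^sup>T + Y Y\<^sup>T = 2 I + Q Q\<^sup>T\<close> with \<open>Q = Z - Y\<close>.

  The fitting error \<open>\<Phi>\<close> of \<open>W\<close> on \<open>\<Omega> \<union> \<Omega>\<^sup>T\<close> then obeys \<open>\<Phi>' \<le> - 2\<rho>\<Phi> + 2\<lambda>\<^sup>2\<Phi>(0)/\<rho>\<close>
  with \<open>\<rho> = 4\<beta>/|\<Omega>|\<close>: the alignment term contributes \<open>-4\<rho>\<Phi>\<close>, the weight decay at most
  \<open>2\<rho>\<Phi> + 2\<lambda>\<^sup>2\<Phi>(0)/\<rho>\<close>. At \<open>T = (1 - c) log \<alpha> / \<lambda>\<close> one has \<open>\<beta>(T) = \<alpha>^(2c)\<close>, so by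
  Gronwall \<open>\<Phi>(T) \<rightarrow> 0\<close> as long as \<open>\<lambda>\<close> stays bounded: the observed entries are fitted.

  Off \<open>\<Omega> \<union> \<Omega>\<^sup>T\<close> the entries of \<open>G\<close> vanish, so there \<open>N = Z Z\<^sup>T - Y Y\<^sup>T\<close> only moves through
  \<open>Q Q\<^sup>T G + G Q Q\<^sup>T\<close>, which is at most \<open>2 |G| |Q|\<^sup>2\<close>. The bound on \<open>\<Phi>\<close> makes \<open>\<Gamma> = \<integral>\<^sub>0\<^sup>T |G|\<close> of
  order \<open>log \<alpha> / \<alpha>^(2c)\<close>, Gronwall applied to \<open>|Z|\<^sup>2 + |Y|\<^sup>2 = |Q|\<^sup>2 + 2d\<close> gives \<open>|Q|\<^sup>2 = O(\<Gamma>)\<close>, and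
  so these entries of \<open>W = \<beta> N\<close> are \<open>O(\<alpha>^(2c) \<Gamma>\<^sup>2) \<rightarrow> 0\<close>.
\<close>

section \<open>Real matrices and the Frobenius inner product\<close>

lemma transpose_nth [simp]: "transpose A $ i $ j = A $ j $ i"
  by (simp add: transpose_def)

lemma matrix_matrix_mult_nth: "(A ** B) $ i $ j = (\<Sum>k\<in>UNIV. A $ i $ k * B $ k $ j)"
  by (simp add: matrix_matrix_mult_def)

lemma symmetric_matrix_nth: "transpose A = A \<Longrightarrow> A $ j $ i = A $ i $ j"
  by (metis transpose_nth)

lemma matrix_add_rdistrib: "(A + B) ** C = A ** C + B ** C"
  for A B :: "'a::semiring_1^'n::finite^'m::finite" and C :: "'a^'k::finite^'n"
  by (simp add: matrix_matrix_mult_def vec_eq_iff distrib_right sum.distrib)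

lemma matrix_diff_ldistrib: "A ** (B - C) = A ** B - A ** C"
  for A :: "'a::ring_1^'n::finite^'m::finite" and B C :: "'a^'k::finite^'n"
  by (simp add: matrix_matrix_mult_def vec_eq_iff right_diff_distrib sum_subtractf)

lemma matrix_diff_rdistrib: "(A - B) ** C = A ** C - B ** C"
  for A B :: "'a::ring_1^'n::finite^'m::finite" and C :: "'a^'k::finite^'n"
  by (simp add: matrix_matrix_mult_def vec_eq_iff left_diff_distrib sum_subtractf)

lemma matrix_neg_left: "(- A) ** B = - (A ** B)"
  for A :: "'a::ring_1^'n::finite^'m::finite" and B :: "'a^'k::finite^'n"
  by (simp add: matrix_matrix_mult_def vec_eq_iff sum_negf)

lemma matrix_neg_right: "A ** (- B) = - (A ** B)"
  for A :: "'a::ring_1^'n::finite^'m::finite" and B :: "'a^'k::finite^'n"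
  by (simp add: matrix_matrix_mult_def vec_eq_iff sum_negf)

lemma transpose_add: "transpose (A + B) = transpose A + transpose B"
  by (simp add: vec_eq_iff)

lemma transpose_diff: "transpose (A - B) = transpose A - transpose B"
  by (simp add: vec_eq_iff)

lemma transpose_minus: "transpose (- A) = - transpose A"
  by (simp add: vec_eq_iff)

lemma bounded_bilinear_matrix_mult:
  "bounded_bilinear ((**) :: real^'n::finite^'m::finite \<Rightarrow> real^'k::finite^'n \<Rightarrow> real^'k^'m)"
  by (auto simp: bilinear_conv_bounded_bilinear[symmetric] bilinear_def intro!: linearI
      simp: matrix_add_ldistrib matrix_add_rdistrib scalar_matrix_assoc matrix_scalar_ac)

lemma bounded_linear_transpose: "bounded_linear (transpose :: real^'n::finite^'m::finite \<Rightarrow> real^'m^'n)"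
  by (auto simp: linear_conv_bounded_linear[symmetric] intro!: linearI
      simp: transpose_add transpose_scalar)

lemma bounded_linear_matrix_nth: "bounded_linear (\<lambda>A::real^'n::finite^'m::finite. A $ i $ j)"
  using bounded_linear_compose[OF bounded_linear_vec_nth bounded_linear_vec_nth] .

lemma inner_matrix: "A \<bullet> B = (\<Sum>i\<in>UNIV. \<Sum>j\<in>UNIV. A $ i $ j * B $ i $ j)"
  for A B :: "real^'n::finite^'m::finite"
  by (simp add: inner_vec_def)

lemma inner_transpose: "A \<bullet> transpose B = transpose A \<bullet> B"
  for A :: "real^'n::finite^'m::finite" and B :: "real^'m^'n"
  unfolding inner_matrix transpose_nth by (rule sum.swap)

lemma inner_matrix_mult_right: "A \<bullet> (B ** C) = (A ** transpose C) \<bullet> B"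
  for A :: "real^'k::finite^'m::finite" and B :: "real^'n::finite^'m" and C :: "real^'k^'n"
  unfolding inner_matrix matrix_matrix_mult_nth transpose_nth sum_distrib_left sum_distrib_right
  by (rule sum.cong[OF refl], subst sum.swap) (simp add: mult_ac)

lemma inner_matrix_mult_left: "A \<bullet> (B ** C) = (transpose B ** A) \<bullet> C"
  for A :: "real^'k::finite^'m::finite" and B :: "real^'n::finite^'m" and C :: "real^'k^'n"
proof -
  have "A \<bullet> (B ** C) = transpose A \<bullet> (transpose C ** transpose B)"
    by (metis inner_transpose matrix_transpose_mul transpose_transpose)
  also have "\<dots> = transpose (transpose A ** B) \<bullet> C"
    by (simp add: inner_matrix_mult_right inner_transpose)
  finally show ?thesis
    by (simp add: matrix_transpose_mul)
qed

lemma inner_matrix_eq_diag_sum: "A \<bullet> B = (\<Sum>j\<in>UNIV. (transpose A ** B) $ j $ j)"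
  for A B :: "real^'n::finite^'m::finite"
  by (simp add: inner_matrix matrix_matrix_mult_nth) (rule sum.swap)

lemma norm_transpose: "norm (transpose A) = norm A"
  for A :: "real^'n::finite^'m::finite"
  by (simp add: norm_eq_sqrt_inner inner_transpose[of "transpose A" A])

lemma norm_sq_matrix_rows: "(norm A)\<^sup>2 = (\<Sum>i\<in>UNIV. (norm (A $ i))\<^sup>2)"
  for A :: "real^'n::finite^'m::finite"
  by (simp add: power2_norm_eq_inner inner_vec_def)

lemma norm_matrix_mult_le: "norm (A ** B) \<le> norm A * norm B"
  for A :: "real^'n::finite^'m::finite" and B :: "real^'k::finite^'n"
proof -
  have "(norm (A ** B))\<^sup>2 = (\<Sum>i\<in>UNIV. \<Sum>j\<in>UNIV. (A $ i \<bullet> transpose B $ j)\<^sup>2)"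
    unfolding power2_norm_eq_inner
    by (simp add: inner_matrix matrix_matrix_mult_nth inner_vec_def power2_eq_square mult.commute)
  also have "\<dots> \<le> (\<Sum>i\<in>UNIV. \<Sum>j\<in>UNIV. (norm (A $ i))\<^sup>2 * (norm (transpose B $ j))\<^sup>2)"
  proof (intro sum_mono)
    fix i j
    have "\<bar>A $ i \<bullet> transpose B $ j\<bar> \<le> norm (A $ i) * norm (transpose B $ j)"
      by (rule Cauchy_Schwarz_ineq2)
    then show "(A $ i \<bullet> transpose B $ j)\<^sup>2 \<le> (norm (A $ i))\<^sup>2 * (norm (transpose B $ j))\<^sup>2"
      by (metis abs_ge_zero power2_abs power_mono power_mult_distrib)
  qed
  also have "\<dots> = (norm A * norm (transpose B))\<^sup>2"
    by (simp add: norm_sq_matrix_rows sum_product power_mult_distrib)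
  also have "\<dots> = (norm A * norm B)\<^sup>2"
    by (simp only: norm_transpose)
  finally show ?thesis
    by (rule power2_le_imp_le) simp
qed

lemma abs_matrix_nth_le_norm: "\<bar>A $ i $ j\<bar> \<le> norm A"
  for A :: "real^'n::finite^'m::finite"
  using component_le_norm_cart[of "A $ i" j] Finite_Cartesian_Product.norm_nth_le[of A i] by linarith

lemma abs_inner_matrix_mult_le: "\<bar>A \<bullet> (B ** C)\<bar> \<le> norm A * (norm B * norm C)"
  for A :: "real^'k::finite^'m::finite" and B :: "real^'n::finite^'m" and C :: "real^'k^'n"
  by (meson Cauchy_Schwarz_ineq2 mult_left_mono norm_ge_zero norm_matrix_mult_le order_trans)

lemma abs_inner_self_matrix_mult_le: "\<bar>A \<bullet> (B ** A)\<bar> \<le> norm B * (A \<bullet> A)"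
  for A :: "real^'k::finite^'n::finite" and B :: "real^'n^'n"
  using abs_inner_matrix_mult_le[of A B A] by (simp add: dot_square_norm power2_eq_square mult_ac)

lemma inner_anticommutator_ge:
  fixes A :: "real^'n::finite^'n" and Q :: "real^'k::finite^'n"
  shows "4 * (A \<bullet> A)
    \<le> A \<bullet> ((2 *\<^sub>R mat 1 + Q ** transpose Q) ** A + A ** (2 *\<^sub>R mat 1 + Q ** transpose Q))"
proof -
  have "A \<bullet> ((Q ** transpose Q) ** A) = (transpose Q ** A) \<bullet> (transpose Q ** A)"
    by (simp add: inner_matrix_mult_left matrix_mul_assoc[symmetric])
  moreover have "A \<bullet> (A ** (Q ** transpose Q)) = (A ** Q) \<bullet> (A ** Q)"
    by (simp add: inner_matrix_mult_right matrix_mul_assoc)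
  ultimately show ?thesis
    by (simp add: matrix_add_ldistrib matrix_add_rdistrib scalar_matrix_assoc[symmetric]
        matrix_scalar_ac inner_add_right)
qed

section \<open>Differential inequalities\<close>

lemma DERIV_nonpos_imp_nonincreasing_within:
  fixes f f' :: "real \<Rightarrow> real"
  assumes "a \<le> b"
    and "\<And>t. a \<le> t \<Longrightarrow> t \<le> b \<Longrightarrow> (f has_real_derivative f' t) (at t within {a..})"
    and "\<And>t. a \<le> t \<Longrightarrow> t \<le> b \<Longrightarrow> f' t \<le> 0"
  shows "f b \<le> f a"
proof -
  have "(f has_derivative (\<lambda>h. f' t * h)) (at t within {a..b})" if "a \<le> t" "t \<le> b" for t
    by (rule has_derivative_subset[OF assms(2)[OF that, unfolded has_field_derivative_def]]) auto
  then have "\<exists>t\<in>{a..b}. f b - f a = f' t * (b - a)"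
    using mvt_very_simple[OF assms(1), of f "\<lambda>t h. f' t * h"] by simp
  then obtain t where "t \<in> {a..b}" "f b - f a = f' t * (b - a)"
    by blast
  moreover have "f' t * (b - a) \<le> 0"
    using assms(1) assms(3)[of t] \<open>t \<in> {a..b}\<close> by (simp add: mult_nonpos_nonneg)
  ultimately show ?thesis
    by simp
qed

lemma differential_gronwall:
  fixes h h' \<Gamma> \<gamma> :: "real \<Rightarrow> real"
  assumes "a \<le> b"
    and h: "\<And>t. a \<le> t \<Longrightarrow> t \<le> b \<Longrightarrow> (h has_real_derivative h' t) (at t within {a..})"
    and \<Gamma>: "\<And>t. a \<le> t \<Longrightarrow> t \<le> b \<Longrightarrow> (\<Gamma> has_real_derivative \<gamma> t) (at t within {a..})"
    and h'_le: "\<And>t. a \<le> t \<Longrightarrow> t \<le> b \<Longrightarrow> h' t \<le> \<gamma> t * h t"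
  shows "h b \<le> h a * exp (\<Gamma> b - \<Gamma> a)"
proof -
  have "h b * exp (- \<Gamma> b) \<le> h a * exp (- \<Gamma> a)"
  proof (rule DERIV_nonpos_imp_nonincreasing_within[OF \<open>a \<le> b\<close>])
    fix t
    assume t: "a \<le> t" "t \<le> b"
    show "((\<lambda>t. h t * exp (- \<Gamma> t)) has_real_derivative (h' t - \<gamma> t * h t) * exp (- \<Gamma> t))
        (at t within {a..})"
      by (rule derivative_eq_intros h[OF t] \<Gamma>[OF t] refl)+ (simp add: algebra_simps)
    show "(h' t - \<gamma> t * h t) * exp (- \<Gamma> t) \<le> 0"
      using h'_le[OF t] by (simp add: mult_nonpos_nonneg)
  qed
  then have "h b * exp (- \<Gamma> b) * exp (\<Gamma> b) \<le> h a * exp (- \<Gamma> a) * exp (\<Gamma> b)"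
    by (simp add: mult_right_mono)
  then show ?thesis
    by (simp add: mult.assoc exp_add[symmetric] exp_diff)
qed

lemma DERIV_abs_le_imp_abs_diff_le:
  fixes f f' \<Gamma> g :: "real \<Rightarrow> real"
  assumes "a \<le> b"
    and f: "\<And>t. a \<le> t \<Longrightarrow> t \<le> b \<Longrightarrow> (f has_real_derivative f' t) (at t within {a..})"
    and \<Gamma>: "\<And>t. a \<le> t \<Longrightarrow> t \<le> b \<Longrightarrow> (\<Gamma> has_real_derivative g t) (at t within {a..})"
    and f'_le: "\<And>t. a \<le> t \<Longrightarrow> t \<le> b \<Longrightarrow> \<bar>f' t\<bar> \<le> g t"
  shows "\<bar>f b - f a\<bar> \<le> \<Gamma> b - \<Gamma> a"
proof -
  have "(\<lambda>t. s * f t - \<Gamma> t) b \<le> (\<lambda>t. s * f t - \<Gamma> t) a" if "\<bar>s\<bar> = 1" for s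
  proof (rule DERIV_nonpos_imp_nonincreasing_within[OF \<open>a \<le> b\<close>])
    fix t
    assume t: "a \<le> t" "t \<le> b"
    show "((\<lambda>t. s * f t - \<Gamma> t) has_real_derivative s * f' t - g t) (at t within {a..})"
      by (rule derivative_eq_intros f[OF t] \<Gamma>[OF t] refl)+ simp
    show "s * f' t - g t \<le> 0"
      using f'_le[OF t] that by (auto simp: abs_if split: if_splits)
  qed
  from this[of 1] this[of "-1"] show ?thesis
    by (simp add: abs_le_iff)
qed

lemma cross_term_le:
  fixes l r d x :: real
  assumes "0 \<le> l" "0 < r"
  shows "- 4 * l * (d * (d + x)) \<le> 2 * r * d\<^sup>2 + 2 * l\<^sup>2 / r * x\<^sup>2"
proof -
  have "0 \<le> 2 * r * (d + l * x / r)\<^sup>2"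
    using assms by simp
  also have "\<dots> = 2 * r * d\<^sup>2 + 4 * l * d * x + 2 * l\<^sup>2 / r * x\<^sup>2"
    using assms by (simp add: power2_eq_square field_simps)
  finally have "0 \<le> 2 * r * d\<^sup>2 + 4 * l * d * x + 2 * l\<^sup>2 / r * x\<^sup>2" .
  moreover have "0 \<le> 4 * l * d\<^sup>2"
    using assms by simp
  ultimately show ?thesis
    by (simp add: power2_eq_square algebra_simps)
qed

section \<open>The gradient of the loss\<close>

definition obs_mask :: "('n \<times> 'n) set \<Rightarrow> real^'n::finite^'n \<Rightarrow> real^'n^'n" where
  "obs_mask \<Omega> A = (\<chi> i j. if (i, j) \<in> \<Omega> then A $ i $ j else 0)"

definition data_gradient :: "real^'n::finite^'n \<Rightarrow> ('n \<times> 'n) set \<Rightarrow> real^'n^'n \<Rightarrow> real^'n^'n"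
  where "data_gradient Xs \<Omega> W =
    (2 / real (card \<Omega>)) *\<^sub>R (obs_mask \<Omega> (W - Xs) + transpose (obs_mask \<Omega> (W - Xs)))"

definition loss_gradient :: "real^'n::finite^'n \<Rightarrow> ('n \<times> 'n) set \<Rightarrow> real \<Rightarrow> 'n params \<Rightarrow> 'n params"
  where "loss_gradient Xs \<Omega> lam \<theta> =
    (data_gradient Xs \<Omega> (Wmat \<theta>) ** fst \<theta> + lam *\<^sub>R fst \<theta>,
     lam *\<^sub>R snd \<theta> - data_gradient Xs \<Omega> (Wmat \<theta>) ** snd \<theta>)"

definition Wmat_differential :: "'n::finite params \<Rightarrow> 'n params \<Rightarrow> real^'n^'n" where
  "Wmat_differential \<theta> h = fst h ** transpose (fst \<theta>) + fst \<theta> ** transpose (fst h)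
    - (snd h ** transpose (snd \<theta>) + snd \<theta> ** transpose (snd h))"

lemma Wmat_has_derivative: "(Wmat has_derivative Wmat_differential \<theta>) (at \<theta>)"
proof -
  have fst: "(fst has_derivative fst) (at \<theta>)"
    by (rule bounded_linear_imp_has_derivative[OF bounded_linear_fst])
  have snd: "(snd has_derivative snd) (at \<theta>)"
    by (rule bounded_linear_imp_has_derivative[OF bounded_linear_snd])
  note product = bounded_bilinear.FDERIV[OF bounded_bilinear_matrix_mult]
  note transpose = bounded_linear.has_derivative[OF bounded_linear_transpose]
  show ?thesis
    unfolding Wmat_def[abs_def]
    by (rule has_derivative_eq_rhs[OF has_derivative_diff[OF
          product[OF fst transpose[OF fst]] product[OF snd transpose[OF snd]]]])
       (simp add: fun_eq_iff Wmat_differential_def algebra_simps)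
qed

lemma sum_observed_eq_inner_obs_mask:
  "(\<Sum>(i, j)\<in>\<Omega>. A $ i $ j * B $ i $ j) = obs_mask \<Omega> A \<bullet> B"
  for A B :: "real^'n::finite^'n"
proof -
  have "(\<Sum>(i, j)\<in>\<Omega>. A $ i $ j * B $ i $ j) = (\<Sum>(i, j)\<in>UNIV. obs_mask \<Omega> A $ i $ j * B $ i $ j)"
    by (rule sum.mono_neutral_cong_left) (auto simp: obs_mask_def)
  then show ?thesis
    by (simp add: inner_matrix sum.cartesian_product)
qed

lemma inner_symmetrized_product:
  "R \<bullet> (H ** transpose U + U ** transpose H) = ((R + transpose R) ** U) \<bullet> H"
  for R :: "real^'m::finite^'m" and H U :: "real^'k::finite^'m"
proof -
  have "R \<bullet> (U ** transpose H) = (transpose R ** U) \<bullet> H"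
    by (simp add: inner_matrix_mult_left inner_transpose matrix_transpose_mul)
  then show ?thesis
    by (simp add: inner_add_right inner_matrix_mult_right matrix_add_rdistrib inner_add_left)
qed

lemma inner_loss_gradient:
  "loss_gradient Xs \<Omega> lam \<theta> \<bullet> h
    = 2 / real (card \<Omega>) * (obs_mask \<Omega> (Wmat \<theta> - Xs) \<bullet> Wmat_differential \<theta> h)
      + lam * (fst \<theta> \<bullet> fst h + snd \<theta> \<bullet> snd h)"
proof -
  define R where "R = obs_mask \<Omega> (Wmat \<theta> - Xs)"
  obtain h1 h2 where h: "h = (h1, h2)"
    by (cases h)
  have "data_gradient Xs \<Omega> (Wmat \<theta>) = (2 / real (card \<Omega>)) *\<^sub>R (R + transpose R)"
    by (simp add: data_gradient_def R_def)
  then have gradient: "loss_gradient Xs \<Omega> lam \<theta> \<bullet> (h1, h2)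
      = 2 / real (card \<Omega>) * (((R + transpose R) ** fst \<theta>) \<bullet> h1) + lam * (fst \<theta> \<bullet> h1)
        + (lam * (snd \<theta> \<bullet> h2) - 2 / real (card \<Omega>) * (((R + transpose R) ** snd \<theta>) \<bullet> h2))"
    unfolding loss_gradient_def inner_Pair inner_add_left inner_diff_left
    by (simp add: scalar_matrix_assoc[symmetric])
  have differential: "R \<bullet> Wmat_differential \<theta> (h1, h2)
      = ((R + transpose R) ** fst \<theta>) \<bullet> h1 - ((R + transpose R) ** snd \<theta>) \<bullet> h2"
    by (simp add: Wmat_differential_def inner_diff_right inner_symmetrized_product)
  show ?thesis
    unfolding h fst_conv snd_conv R_def[symmetric] gradient differential by (simp add: algebra_simps)
qed

lemma loss_eq:
  "loss Xs \<Omega> lam \<theta> = 1 / real (card \<Omega>) * (\<Sum>p\<in>\<Omega>. (Wmat \<theta> $ fst p $ snd p - Xs $ fst p $ snd p)\<^sup>2)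
    + lam / 2 * (fst \<theta> \<bullet> fst \<theta> + snd \<theta> \<bullet> snd \<theta>)"
  by (simp add: loss_def frob_sq_def inner_matrix power2_eq_square split_def)

lemma Wmat_nth_sq_has_derivative:
  "((\<lambda>x. (Wmat x $ i $ j - a)\<^sup>2) has_derivative
    (\<lambda>h. 2 * (Wmat \<theta> $ i $ j - a) * Wmat_differential \<theta> h $ i $ j)) (at \<theta>)"
proof -
  have "((\<lambda>x. Wmat x $ i $ j - a) has_derivative (\<lambda>h. Wmat_differential \<theta> h $ i $ j)) (at \<theta>)"
    using bounded_linear.has_derivative[OF bounded_linear_matrix_nth Wmat_has_derivative[of \<theta>]]
    by (auto intro!: derivative_eq_intros)
  then show ?thesis
    by (rule has_derivative_eq_rhs[OF has_derivative_power[of _ _ _ _ 2]]) (simp add: fun_eq_iff)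
qed

lemma loss_has_derivative:
  fixes Xs :: "real^'n::finite^'n"
  shows "(loss Xs \<Omega> lam has_derivative (\<lambda>h. loss_gradient Xs \<Omega> lam \<theta> \<bullet> h)) (at \<theta>)"
proof -
  let ?D = "Wmat_differential \<theta>"
  have fst: "(fst has_derivative fst) (at \<theta>)"
    by (rule bounded_linear_imp_has_derivative[OF bounded_linear_fst])
  have snd: "(snd has_derivative snd) (at \<theta>)"
    by (rule bounded_linear_imp_has_derivative[OF bounded_linear_snd])
  have "(loss Xs \<Omega> lam has_derivative (\<lambda>h. 1 / real (card \<Omega>) *
      (\<Sum>p\<in>\<Omega>. 2 * (Wmat \<theta> $ fst p $ snd p - Xs $ fst p $ snd p) * ?D h $ fst p $ snd p)
      + lam / 2 * ((fst \<theta> \<bullet> fst h + fst h \<bullet> fst \<theta>) + (snd \<theta> \<bullet> snd h + snd h \<bullet> snd \<theta>))))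
      (at \<theta>)"
    unfolding loss_eq[abs_def] by (intro derivative_intros Wmat_nth_sq_has_derivative fst snd)
  moreover have "1 / real (card \<Omega>) *
      (\<Sum>p\<in>\<Omega>. 2 * (Wmat \<theta> $ fst p $ snd p - Xs $ fst p $ snd p) * ?D h $ fst p $ snd p)
      + lam / 2 * ((fst \<theta> \<bullet> fst h + fst h \<bullet> fst \<theta>) + (snd \<theta> \<bullet> snd h + snd h \<bullet> snd \<theta>))
      = loss_gradient Xs \<Omega> lam \<theta> \<bullet> h" for h
  proof -
    have "(\<Sum>p\<in>\<Omega>. 2 * (Wmat \<theta> $ fst p $ snd p - Xs $ fst p $ snd p) * ?D h $ fst p $ snd p)
        = 2 * (\<Sum>p\<in>\<Omega>. (Wmat \<theta> $ fst p $ snd p - Xs $ fst p $ snd p) * ?D h $ fst p $ snd p)"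
      by (simp only: sum_distrib_left mult.assoc)
    also have "\<dots> = 2 * (obs_mask \<Omega> (Wmat \<theta> - Xs) \<bullet> ?D h)"
      using sum_observed_eq_inner_obs_mask[where \<Omega> = \<Omega> and A = "Wmat \<theta> - Xs" and B = "?D h"]
      by (simp add: split_def)
    finally show ?thesis
      by (simp add: inner_loss_gradient inner_commute[of "fst h" "fst \<theta>"]
          inner_commute[of "snd h" "snd \<theta>"] algebra_simps)
  qed
  ultimately show ?thesis
    by simp
qed

lemma gradient_flow_has_vector_derivative:
  fixes L :: "'a::euclidean_space \<Rightarrow> real"
  assumes "is_gradient_flow L \<theta>0 \<theta>"
    and "\<And>x. (L has_derivative (\<lambda>h. grad x \<bullet> h)) (at x)"
    and "0 \<le> t"
  shows "(\<theta> has_vector_derivative - grad (\<theta> t)) (at t within {0..})"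
proof -
  obtain g where L': "(L has_derivative (\<lambda>h. g \<bullet> h)) (at (\<theta> t))"
    and \<theta>': "(\<theta> has_vector_derivative - g) (at t within {0..})"
    using assms(1,3) unfolding is_gradient_flow_def by blast
  have "(\<lambda>h. g \<bullet> h) = (\<lambda>h. grad (\<theta> t) \<bullet> h)"
    using has_derivative_unique[OF L' assms(2)] .
  then have "g = grad (\<theta> t)"
    by (metis vector_eq_rdot)
  with \<theta>' show ?thesis
    by simp
qed

definition obs_weight :: "('n \<times> 'n) set \<Rightarrow> 'n \<Rightarrow> 'n \<Rightarrow> real" where
  "obs_weight \<Omega> i j = of_bool ((i, j) \<in> \<Omega>) + of_bool ((j, i) \<in> \<Omega>)"

definition weighted_sq_norm :: "('n \<times> 'n) set \<Rightarrow> real^'n::finite^'n \<Rightarrow> real" where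
  "weighted_sq_norm \<Omega> A = (\<Sum>i\<in>UNIV. \<Sum>j\<in>UNIV. obs_weight \<Omega> i j * (A $ i $ j)\<^sup>2)"

lemma obs_weight_nonneg: "0 \<le> obs_weight \<Omega> i j"
  by (simp add: obs_weight_def)

lemma obs_weight_le_sq: "obs_weight \<Omega> i j \<le> (obs_weight \<Omega> i j)\<^sup>2"
  by (auto simp: obs_weight_def)

lemma obs_weight_sq_le: "(obs_weight \<Omega> i j)\<^sup>2 \<le> 2 * obs_weight \<Omega> i j"
  by (auto simp: obs_weight_def)

lemma weighted_sq_norm_nonneg: "0 \<le> weighted_sq_norm \<Omega> A"
  unfolding weighted_sq_norm_def by (intro sum_nonneg mult_nonneg_nonneg obs_weight_nonneg zero_le_power2)

lemma weighted_sq_norm_uminus: "weighted_sq_norm \<Omega> (- A) = weighted_sq_norm \<Omega> A"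
  by (simp add: weighted_sq_norm_def)

lemma sq_nth_le_weighted_sq_norm:
  assumes "(i, j) \<in> \<Omega> \<or> (j, i) \<in> \<Omega>"
  shows "(A $ i $ j)\<^sup>2 \<le> weighted_sq_norm \<Omega> A"
proof -
  have "(A $ i $ j)\<^sup>2 \<le> obs_weight \<Omega> i j * (A $ i $ j)\<^sup>2"
    using assms by (auto simp: obs_weight_def)
  also have "\<dots> \<le> (\<Sum>j\<in>UNIV. obs_weight \<Omega> i j * (A $ i $ j)\<^sup>2)"
    by (rule member_le_sum) (auto intro: mult_nonneg_nonneg obs_weight_nonneg)
  also have "\<dots> \<le> weighted_sq_norm \<Omega> A"
    unfolding weighted_sq_norm_def
    by (rule member_le_sum[of _ _ "\<lambda>i. \<Sum>j\<in>UNIV. obs_weight \<Omega> i j * (A $ i $ j)\<^sup>2"])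
       (auto intro!: sum_nonneg mult_nonneg_nonneg obs_weight_nonneg)
  finally show ?thesis .
qed

lemma data_gradient_nth:
  assumes "transpose Xs = Xs" "transpose W = W"
  shows "data_gradient Xs \<Omega> W $ i $ j
    = 2 / real (card \<Omega>) * obs_weight \<Omega> i j * (W $ i $ j - Xs $ i $ j)"
  using symmetric_matrix_nth[OF assms(1)] symmetric_matrix_nth[OF assms(2)]
  by (simp add: data_gradient_def obs_mask_def obs_weight_def algebra_simps)

lemma data_gradient_symmetric: "transpose (data_gradient Xs \<Omega> W) = data_gradient Xs \<Omega> W"
  by (simp add: data_gradient_def transpose_scalar transpose_add add.commute)

section \<open>The rescaled flow\<close>

locale completion_flow =
  fixes Xs :: "real^'n::finite^'n" and \<Omega> :: "('n \<times> 'n) set" and lam \<alpha> :: real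
    and \<theta> :: "real \<Rightarrow> 'n params"
  assumes Xs_symmetric: "transpose Xs = Xs"
    and \<Omega>_nonempty: "\<Omega> \<noteq> {}"
    and \<alpha>_pos: "0 < \<alpha>"
    and lam_pos: "0 < lam"
    and gradient_flow: "is_gradient_flow (loss Xs \<Omega> lam) (mat \<alpha>, mat \<alpha>) \<theta>"
begin

abbreviation nobs :: real where "nobs \<equiv> real (card \<Omega>)"

abbreviation K :: real where "K \<equiv> weighted_sq_norm \<Omega> Xs"

definition "W t = Wmat (\<theta> t)"
definition "G t = data_gradient Xs \<Omega> (W t)"
definition "\<beta> t = \<alpha>\<^sup>2 * exp (- 2 * lam * t)"
definition "\<rho> t = 4 * \<beta> t / nobs"
definition "Z t = (exp (lam * t) / \<alpha>) *\<^sub>R fst (\<theta> t)"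
definition "Y t = (exp (lam * t) / \<alpha>) *\<^sub>R snd (\<theta> t)"
definition "Q t = Z t - Y t"
definition "N t = Z t ** transpose (Z t) - Y t ** transpose (Y t)"
definition "M t = Z t ** transpose (Z t) + Y t ** transpose (Y t)"
definition "W' t = - (2 * lam) *\<^sub>R W t - \<beta> t *\<^sub>R (M t ** G t + G t ** M t)"
definition "E t = Z t \<bullet> Z t + Y t \<bullet> Y t"
definition "\<Phi> t = weighted_sq_norm \<Omega> (W t - Xs)"

lemma nobs_pos: "0 < nobs"
  using \<Omega>_nonempty by (simp add: card_gt_0_iff)

lemma \<beta>_pos: "0 < \<beta> t"
  using \<alpha>_pos by (simp add: \<beta>_def)

lemma \<rho>_pos: "0 < \<rho> t"
  using \<beta>_pos nobs_pos by (simp add: \<rho>_def)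

lemma \<rho>_antimono:
  assumes "s \<le> t"
  shows "\<rho> t \<le> \<rho> s"
proof -
  have "exp (- 2 * lam * t) \<le> exp (- 2 * lam * s)"
    using assms lam_pos by (simp add: mult_left_mono)
  then show ?thesis
    unfolding \<rho>_def \<beta>_def using nobs_pos by (intro divide_right_mono mult_left_mono) auto
qed

lemma \<beta>_has_derivative: "(\<beta> has_real_derivative - 2 * lam * \<beta> t) (at t within S)"
  unfolding \<beta>_def[abs_def] by (auto intro!: derivative_eq_intros)

lemma \<theta>_has_derivative:
  "0 \<le> t \<Longrightarrow> (\<theta> has_vector_derivative - loss_gradient Xs \<Omega> lam (\<theta> t)) (at t within {0..})"
  by (rule gradient_flow_has_vector_derivative[OF gradient_flow loss_has_derivative])

lemma G_symmetric: "transpose (G t) = G t"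
  by (simp add: G_def data_gradient_symmetric)

lemma W_symmetric: "transpose (W t) = W t"
  by (simp add: W_def Wmat_def transpose_diff matrix_transpose_mul)

lemma G_nth: "G t $ i $ j = 2 / nobs * obs_weight \<Omega> i j * (W t $ i $ j - Xs $ i $ j)"
  unfolding G_def by (rule data_gradient_nth[OF Xs_symmetric W_symmetric])

lemma rescaling_has_derivative:
  "((\<lambda>t. exp (lam * t) / \<alpha>) has_real_derivative lam * (exp (lam * t) / \<alpha>)) (at t within S)"
  using \<alpha>_pos by (auto intro!: derivative_eq_intros)

lemma Z_has_derivative: "0 \<le> t \<Longrightarrow> (Z has_vector_derivative - (G t ** Z t)) (at t within {0..})"
  unfolding Z_def[abs_def]
  by (rule has_vector_derivative_eq_rhs[OF has_vector_derivative_scaleR[OF rescaling_has_derivative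
        bounded_linear.has_vector_derivative[OF bounded_linear_fst \<theta>_has_derivative]]])
     (simp_all add: loss_gradient_def G_def W_def matrix_scalar_ac scalar_matrix_assoc[symmetric]
        algebra_simps)

lemma Y_has_derivative: "0 \<le> t \<Longrightarrow> (Y has_vector_derivative G t ** Y t) (at t within {0..})"
  unfolding Y_def[abs_def]
  by (rule has_vector_derivative_eq_rhs[OF has_vector_derivative_scaleR[OF rescaling_has_derivative
        bounded_linear.has_vector_derivative[OF bounded_linear_snd \<theta>_has_derivative]]])
     (simp_all add: loss_gradient_def G_def W_def matrix_scalar_ac scalar_matrix_assoc[symmetric]
        algebra_simps)

lemma Z_0: "Z 0 = mat 1" and Y_0: "Y 0 = mat 1"
  using gradient_flow \<alpha>_pos by (auto simp: is_gradient_flow_def Z_def Y_def vec_eq_iff mat_def)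

lemma transpose_Z_mult_Y:
  assumes "0 \<le> t"
  shows "transpose (Z t) ** Y t = mat 1"
proof -
  have "\<exists>C. \<forall>s\<in>{0..}. transpose (Z s) ** Y s = C"
  proof (rule has_derivative_zero_constant)
    fix s :: real
    assume s: "s \<in> {0..}"
    have "((\<lambda>s. transpose (Z s) ** Y s) has_vector_derivative
        transpose (Z s) ** (G s ** Y s) + transpose (- (G s ** Z s)) ** Y s) (at s within {0..})"
      using s by (intro bounded_bilinear.has_vector_derivative[OF bounded_bilinear_matrix_mult]
          bounded_linear.has_vector_derivative[OF bounded_linear_transpose]
          Z_has_derivative Y_has_derivative) auto
    moreover have "transpose (Z s) ** (G s ** Y s) + transpose (- (G s ** Z s)) ** Y s = 0"
      by (simp add: transpose_minus matrix_transpose_mul G_symmetric matrix_neg_left matrix_mul_assoc)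
    ultimately show "((\<lambda>s. transpose (Z s) ** Y s) has_derivative (\<lambda>h. 0)) (at s within {0..})"
      by (simp add: has_vector_derivative_def)
  qed (simp add: convex_real_interval)
  then show ?thesis
    using assms by (metis Z_0 Y_0 atLeast_iff order_refl transpose_mat matrix_mul_lid)
qed

lemma
  assumes "0 \<le> t"
  shows Y_mult_transpose_Z: "Y t ** transpose (Z t) = mat 1"
    and Z_mult_transpose_Y: "Z t ** transpose (Y t) = mat 1"
proof -
  show "Y t ** transpose (Z t) = mat 1"
    using transpose_Z_mult_Y[OF assms] matrix_left_right_inverse by blast
  then show "Z t ** transpose (Y t) = mat 1"
    by (metis matrix_transpose_mul transpose_mat transpose_transpose)
qed

lemma M_eq: "0 \<le> t \<Longrightarrow> M t = 2 *\<^sub>R mat 1 + Q t ** transpose (Q t)"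
  by (simp add: M_def Q_def transpose_diff matrix_diff_ldistrib matrix_diff_rdistrib
      Z_mult_transpose_Y Y_mult_transpose_Z scaleR_2 algebra_simps)

lemma fst_\<theta>_eq: "fst (\<theta> t) = (\<alpha> * exp (- (lam * t))) *\<^sub>R Z t"
  and snd_\<theta>_eq: "snd (\<theta> t) = (\<alpha> * exp (- (lam * t))) *\<^sub>R Y t"
  using \<alpha>_pos by (simp_all add: Z_def Y_def exp_minus field_simps)

lemma W_eq: "W t = \<beta> t *\<^sub>R N t"
proof -
  have "(\<alpha> * exp (- (lam * t))) * (\<alpha> * exp (- (lam * t))) = \<beta> t"
    by (simp add: \<beta>_def power2_eq_square exp_add[symmetric] algebra_simps)
  then show ?thesis
    by (simp add: W_def Wmat_def N_def fst_\<theta>_eq snd_\<theta>_eq transpose_scalar matrix_scalar_ac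
        scalar_matrix_assoc[symmetric] scaleR_diff_right)
qed

lemma N_0: "N 0 = 0"
  by (simp add: N_def Z_0 Y_0)

lemma N_has_derivative:
  assumes "0 \<le> t"
  shows "(N has_vector_derivative - (M t ** G t + G t ** M t)) (at t within {0..})"
proof -
  note product = bounded_bilinear.has_vector_derivative[OF bounded_bilinear_matrix_mult]
  note transpose = bounded_linear.has_vector_derivative[OF bounded_linear_transpose]
  have "(N has_vector_derivative
      (Z t ** transpose (- (G t ** Z t)) + - (G t ** Z t) ** transpose (Z t))
      - (Y t ** transpose (G t ** Y t) + G t ** Y t ** transpose (Y t))) (at t within {0..})"
    unfolding N_def[abs_def]
    by (intro has_vector_derivative_diff product transpose Z_has_derivative Y_has_derivative assms)
  moreover have "(Z t ** transpose (- (G t ** Z t)) + - (G t ** Z t) ** transpose (Z t))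
      - (Y t ** transpose (G t ** Y t) + G t ** Y t ** transpose (Y t))
      = - (M t ** G t + G t ** M t)"
    by (simp add: M_def transpose_minus matrix_transpose_mul G_symmetric matrix_neg_left
        matrix_neg_right matrix_mul_assoc matrix_add_ldistrib matrix_add_rdistrib algebra_simps)
  ultimately show ?thesis
    by simp
qed

lemma W_has_derivative: "0 \<le> t \<Longrightarrow> (W has_vector_derivative W' t) (at t within {0..})"
  unfolding W_eq[abs_def] W'_def W_eq
  by (rule has_vector_derivative_eq_rhs[OF has_vector_derivative_scaleR[OF
        \<beta>_has_derivative N_has_derivative]]) (simp_all add: algebra_simps)

section \<open>Decay of the fitting error\<close>

lemma \<Phi>_eq: "\<Phi> t = (\<Sum>i\<in>UNIV. \<Sum>j\<in>UNIV. obs_weight \<Omega> i j * (W t $ i $ j - Xs $ i $ j)\<^sup>2)"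
  by (simp add: \<Phi>_def weighted_sq_norm_def)

lemma \<Phi>_nonneg: "0 \<le> \<Phi> t"
  by (simp add: \<Phi>_def weighted_sq_norm_nonneg)

lemma \<Phi>_0: "\<Phi> 0 = K"
  by (simp add: \<Phi>_def W_eq N_0 weighted_sq_norm_uminus)

lemma \<Phi>_le_inner_G: "4 / nobs\<^sup>2 * \<Phi> t \<le> G t \<bullet> G t"
proof -
  have "4 / nobs\<^sup>2 * \<Phi> t
      = (\<Sum>i\<in>UNIV. \<Sum>j\<in>UNIV. 4 / nobs\<^sup>2 * obs_weight \<Omega> i j * (W t $ i $ j - Xs $ i $ j)\<^sup>2)"
    by (simp add: \<Phi>_eq sum_distrib_left mult.assoc)
  also have "\<dots> \<le> (\<Sum>i\<in>UNIV. \<Sum>j\<in>UNIV.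
      4 / nobs\<^sup>2 * (obs_weight \<Omega> i j)\<^sup>2 * (W t $ i $ j - Xs $ i $ j)\<^sup>2)"
    by (intro sum_mono mult_right_mono mult_left_mono obs_weight_le_sq) auto
  also have "\<dots> = G t \<bullet> G t"
    by (simp add: inner_matrix G_nth power2_eq_square field_simps)
  finally show ?thesis .
qed

lemma inner_G_le_\<Phi>: "G t \<bullet> G t \<le> 8 / nobs\<^sup>2 * \<Phi> t"
proof -
  have "G t \<bullet> G t = (\<Sum>i\<in>UNIV. \<Sum>j\<in>UNIV.
      4 / nobs\<^sup>2 * (obs_weight \<Omega> i j)\<^sup>2 * (W t $ i $ j - Xs $ i $ j)\<^sup>2)"
    by (simp add: inner_matrix G_nth power2_eq_square field_simps)
  also have "\<dots> \<le> (\<Sum>i\<in>UNIV. \<Sum>j\<in>UNIV.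
      4 / nobs\<^sup>2 * (2 * obs_weight \<Omega> i j) * (W t $ i $ j - Xs $ i $ j)\<^sup>2)"
    by (intro sum_mono mult_right_mono mult_left_mono obs_weight_sq_le) auto
  also have "\<dots> = 8 / nobs\<^sup>2 * \<Phi> t"
    by (simp add: \<Phi>_eq sum_distrib_left algebra_simps)
  finally show ?thesis .
qed

lemma norm_G_le: "norm (G t) \<le> sqrt 8 / nobs * sqrt (\<Phi> t)"
proof -
  have "norm (G t) = sqrt (G t \<bullet> G t)"
    by (simp add: norm_eq_sqrt_inner)
  also have "\<dots> \<le> sqrt (8 / nobs\<^sup>2 * \<Phi> t)"
    using inner_G_le_\<Phi> by simp
  also have "\<dots> = sqrt 8 / nobs * sqrt (\<Phi> t)"
    using nobs_pos by (simp add: real_sqrt_mult real_sqrt_divide)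
  finally show ?thesis .
qed

lemma nobs_inner_G:
  "nobs * (G t \<bullet> A)
    = (\<Sum>i\<in>UNIV. \<Sum>j\<in>UNIV. obs_weight \<Omega> i j * (2 * (W t $ i $ j - Xs $ i $ j) * A $ i $ j))"
proof -
  have cancel: "nobs * (2 / nobs) = 2"
    using \<Omega>_nonempty by simp
  have termwise: "nobs * (G t $ i $ j * A $ i $ j)
      = obs_weight \<Omega> i j * (2 * (W t $ i $ j - Xs $ i $ j) * A $ i $ j)" for i j
    by (simp only: G_nth mult.assoc[symmetric] cancel)
  show ?thesis
    unfolding inner_matrix sum_distrib_left by (simp only: termwise)
qed

lemma \<Phi>_has_derivative:
  assumes "0 \<le> t"
  shows "(\<Phi> has_real_derivative nobs * (G t \<bullet> W' t)) (at t within {0..})"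
proof -
  have entry: "((\<lambda>t. W t $ i $ j) has_real_derivative W' t $ i $ j) (at t within {0..})" for i j
    unfolding has_real_derivative_iff_has_vector_derivative
    by (rule bounded_linear.has_vector_derivative[OF bounded_linear_matrix_nth W_has_derivative[OF assms]])
  have "(\<Phi> has_real_derivative (\<Sum>i\<in>UNIV. \<Sum>j\<in>UNIV.
      obs_weight \<Omega> i j * (2 * (W t $ i $ j - Xs $ i $ j) * W' t $ i $ j))) (at t within {0..})"
    unfolding \<Phi>_eq[abs_def]
    by (rule derivative_eq_intros entry refl)+ (simp add: algebra_simps)
  then show ?thesis
    by (simp add: nobs_inner_G)
qed

lemma alignment_term_ge:
  assumes "0 \<le> t"
  shows "4 * \<rho> t * \<Phi> t \<le> nobs * \<beta> t * (G t \<bullet> (M t ** G t + G t ** M t))"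
proof -
  have "4 * \<rho> t * \<Phi> t = nobs * \<beta> t * (4 * (4 / nobs\<^sup>2 * \<Phi> t))"
    using nobs_pos by (simp add: \<rho>_def power2_eq_square field_simps)
  also have "\<dots> \<le> nobs * \<beta> t * (4 * (G t \<bullet> G t))"
    using \<Phi>_le_inner_G[of t] nobs_pos \<beta>_pos[of t] by (intro mult_left_mono) auto
  also have "\<dots> \<le> nobs * \<beta> t * (G t \<bullet> (M t ** G t + G t ** M t))"
    using inner_anticommutator_ge[of "G t" "Q t"] nobs_pos \<beta>_pos[of t]
    by (intro mult_left_mono) (simp_all add: M_eq[OF assms])
  finally show ?thesis .
qed

lemma weight_decay_term_le:
  "- 2 * lam * (nobs * (G t \<bullet> W t)) \<le> 2 * \<rho> t * \<Phi> t + 2 * lam\<^sup>2 / \<rho> t * K"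
proof -
  have "- 2 * lam * (nobs * (G t \<bullet> W t)) = (\<Sum>i\<in>UNIV. \<Sum>j\<in>UNIV. obs_weight \<Omega> i j *
      (- 4 * lam * ((W t $ i $ j - Xs $ i $ j) * ((W t $ i $ j - Xs $ i $ j) + Xs $ i $ j))))"
    by (simp add: nobs_inner_G sum_distrib_left algebra_simps)
  also have "\<dots> \<le> (\<Sum>i\<in>UNIV. \<Sum>j\<in>UNIV. obs_weight \<Omega> i j *
      (2 * \<rho> t * (W t $ i $ j - Xs $ i $ j)\<^sup>2 + 2 * lam\<^sup>2 / \<rho> t * (Xs $ i $ j)\<^sup>2))"
    using lam_pos \<rho>_pos by (intro sum_mono mult_left_mono cross_term_le obs_weight_nonneg) auto
  also have "\<dots> = 2 * \<rho> t * \<Phi> t + 2 * lam\<^sup>2 / \<rho> t * K"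
    by (simp add: \<Phi>_eq weighted_sq_norm_def sum.distrib sum_distrib_left algebra_simps)
  finally show ?thesis .
qed

lemma \<Phi>_deriv_le: "0 \<le> t \<Longrightarrow> nobs * (G t \<bullet> W' t) \<le> - 2 * \<rho> t * \<Phi> t + 2 * lam\<^sup>2 / \<rho> t * K"
  using weight_decay_term_le[of t] alignment_term_ge[of t]
  by (simp add: W'_def inner_diff_right algebra_simps)

lemma \<Phi>_le:
  assumes "0 \<le> s" "s \<le> T"
  shows "\<Phi> s \<le> K * (exp (- 2 * \<rho> T * s) + (lam / \<rho> T)\<^sup>2)"
proof -
  define plateau where "plateau = (lam / \<rho> T)\<^sup>2 * K"
  have \<rho>T: "0 < \<rho> T"
    by (rule \<rho>_pos)
  have "(\<lambda>t. \<Phi> t - plateau) s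
      \<le> (\<lambda>t. \<Phi> t - plateau) 0 * exp ((\<lambda>t. - 2 * \<rho> T * t) s - (\<lambda>t. - 2 * \<rho> T * t) 0)"
  proof (rule differential_gronwall[OF assms(1)])
    fix t
    assume t: "0 \<le> t" "t \<le> s"
    show "((\<lambda>t. \<Phi> t - plateau) has_real_derivative nobs * (G t \<bullet> W' t)) (at t within {0..})"
      using \<Phi>_has_derivative[OF t(1)] by (auto intro!: derivative_eq_intros)
    show "((\<lambda>t. - 2 * \<rho> T * t) has_real_derivative - 2 * \<rho> T) (at t within {0..})"
      by (auto intro!: derivative_eq_intros)
    have "\<rho> T \<le> \<rho> t"
      using t assms by (intro \<rho>_antimono) simp
    then have "2 * lam\<^sup>2 / \<rho> t \<le> 2 * lam\<^sup>2 / \<rho> T"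
      using \<rho>T by (intro divide_left_mono) (auto intro: mult_pos_pos)
    then have "2 * lam\<^sup>2 / \<rho> t * K \<le> 2 * lam\<^sup>2 / \<rho> T * K"
      using weighted_sq_norm_nonneg[of \<Omega> Xs] by (rule mult_right_mono)
    moreover have "\<rho> T * \<Phi> t \<le> \<rho> t * \<Phi> t"
      using mult_right_mono[OF \<open>\<rho> T \<le> \<rho> t\<close> \<Phi>_nonneg[of t]] .
    moreover have "- 2 * \<rho> T * \<Phi> t + 2 * lam\<^sup>2 / \<rho> T * K = - 2 * \<rho> T * (\<Phi> t - plateau)"
      using \<rho>T by (simp add: plateau_def power2_eq_square field_simps)
    ultimately show "nobs * (G t \<bullet> W' t) \<le> - 2 * \<rho> T * (\<Phi> t - plateau)"
      using \<Phi>_deriv_le[OF t(1)] by linarith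
  qed
  then have "\<Phi> s \<le> plateau + (K - plateau) * exp (- 2 * \<rho> T * s)"
    by (simp add: \<Phi>_0)
  also have "\<dots> \<le> plateau + K * exp (- 2 * \<rho> T * s)"
    using weighted_sq_norm_nonneg[of \<Omega> Xs] by (simp add: plateau_def algebra_simps)
  finally show ?thesis
    by (simp add: plateau_def algebra_simps)
qed

section \<open>Growth off the observed entries\<close>

lemma E_has_derivative:
  "0 \<le> t \<Longrightarrow> (E has_real_derivative 2 * (Y t \<bullet> (G t ** Y t)) - 2 * (Z t \<bullet> (G t ** Z t)))
    (at t within {0..})"
  unfolding has_real_derivative_iff_has_vector_derivative E_def[abs_def]
  by (rule has_vector_derivative_eq_rhs[OF has_vector_derivative_add[OF
        bounded_bilinear.has_vector_derivative[OF bounded_bilinear_inner Z_has_derivative Z_has_derivative]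
        bounded_bilinear.has_vector_derivative[OF bounded_bilinear_inner Y_has_derivative Y_has_derivative]]])
     (auto simp: inner_commute)

lemma E_deriv_le: "2 * (Y t \<bullet> (G t ** Y t)) - 2 * (Z t \<bullet> (G t ** Z t)) \<le> 2 * norm (G t) * E t"
  using abs_inner_self_matrix_mult_le[of "Y t" "G t"] abs_inner_self_matrix_mult_le[of "Z t" "G t"]
  by (simp add: E_def abs_le_iff algebra_simps)

lemma E_nonneg: "0 \<le> E t"
  by (simp add: E_def)

lemma E_0: "E 0 = 2 * real CARD('n)"
  by (simp add: E_def Z_0 Y_0 inner_matrix_eq_diag_sum) (simp add: mat_def)

lemma norm_Q_sq: "0 \<le> t \<Longrightarrow> (norm (Q t))\<^sup>2 = E t - 2 * real CARD('n)"
  using inner_matrix_eq_diag_sum[of "Z t" "Y t"]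
  by (simp add: transpose_Z_mult_Y Q_def E_def power2_norm_eq_inner inner_diff_left inner_diff_right
      inner_commute mat_def)

lemma offsupport_anticommutator_le:
  assumes "0 \<le> t" "(i, j) \<notin> \<Omega>" "(j, i) \<notin> \<Omega>"
  shows "\<bar>(M t ** G t + G t ** M t) $ i $ j\<bar> \<le> 2 * norm (G t) * (norm (Q t))\<^sup>2"
proof -
  define QQ where "QQ = Q t ** transpose (Q t)"
  have "(M t ** G t + G t ** M t) $ i $ j = 4 * G t $ i $ j + (QQ ** G t + G t ** QQ) $ i $ j"
    unfolding M_eq[OF assms(1)] QQ_def[symmetric]
    by (simp add: matrix_add_rdistrib matrix_add_ldistrib scalar_matrix_assoc[symmetric] matrix_scalar_ac)
  moreover have "G t $ i $ j = 0"
    using assms(2,3) by (simp add: G_nth obs_weight_def)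
  ultimately have entry: "(M t ** G t + G t ** M t) $ i $ j = (QQ ** G t + G t ** QQ) $ i $ j"
    by simp
  have QQ: "norm QQ \<le> (norm (Q t))\<^sup>2"
    using norm_matrix_mult_le[of "Q t" "transpose (Q t)"]
    by (simp add: QQ_def norm_transpose power2_eq_square)
  have "norm (QQ ** G t) \<le> norm (G t) * (norm (Q t))\<^sup>2"
    using norm_matrix_mult_le[of QQ "G t"] mult_right_mono[OF QQ norm_ge_zero[of "G t"]]
    by (simp add: mult.commute)
  moreover have "norm (G t ** QQ) \<le> norm (G t) * (norm (Q t))\<^sup>2"
    using norm_matrix_mult_le[of "G t" QQ] mult_left_mono[OF QQ norm_ge_zero[of "G t"]]
    by simp
  moreover have "\<bar>(QQ ** G t + G t ** QQ) $ i $ j\<bar> \<le> norm (QQ ** G t) + norm (G t ** QQ)"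
    using abs_matrix_nth_le_norm[of "QQ ** G t + G t ** QQ" i j]
      norm_triangle_ineq[of "QQ ** G t" "G t ** QQ"]
    by linarith
  ultimately show ?thesis
    unfolding entry by linarith
qed

context
  fixes T :: real and g \<Gamma> :: "real \<Rightarrow> real"
  assumes T_nonneg: "0 \<le> T"
    and norm_G_le_g: "\<And>t. 0 \<le> t \<Longrightarrow> t \<le> T \<Longrightarrow> norm (G t) \<le> g t"
    and \<Gamma>_has_derivative: "\<And>t. 0 \<le> t \<Longrightarrow> t \<le> T \<Longrightarrow> (\<Gamma> has_real_derivative g t) (at t within {0..})"
    and \<Gamma>_0: "\<Gamma> 0 = 0"
begin

lemma \<Gamma>_mono:
  assumes "0 \<le> s" "s \<le> t" "t \<le> T"
  shows "\<Gamma> s \<le> \<Gamma> t"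
proof -
  have "(\<lambda>x. - \<Gamma> x) t \<le> (\<lambda>x. - \<Gamma> x) s"
  proof (rule DERIV_nonpos_imp_nonincreasing_within[OF assms(2)])
    fix x
    assume x: "s \<le> x" "x \<le> t"
    have "(\<Gamma> has_real_derivative g x) (at x within {s..})"
      by (rule DERIV_subset[OF \<Gamma>_has_derivative]) (use x assms in auto)
    then show "((\<lambda>x. - \<Gamma> x) has_real_derivative - g x) (at x within {s..})"
      by (rule DERIV_minus)
    show "- g x \<le> 0"
      using norm_G_le_g[of x] norm_ge_zero[of "G x"] x assms by linarith
  qed
  then show ?thesis
    by simp
qed

lemma E_le:
  assumes "0 \<le> s" "s \<le> T"
  shows "E s \<le> 2 * real CARD('n) * exp (2 * \<Gamma> s)"
proof -
  have "E s \<le> E 0 * exp ((\<lambda>t. 2 * \<Gamma> t) s - (\<lambda>t. 2 * \<Gamma> t) 0)"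
  proof (rule differential_gronwall[OF assms(1) E_has_derivative])
    fix t
    assume t: "0 \<le> t" "t \<le> s"
    show "((\<lambda>t. 2 * \<Gamma> t) has_real_derivative 2 * g t) (at t within {0..})"
      using \<Gamma>_has_derivative[of t] t assms by (auto intro!: derivative_eq_intros)
    have "2 * (Y t \<bullet> (G t ** Y t)) - 2 * (Z t \<bullet> (G t ** Z t)) \<le> 2 * norm (G t) * E t"
      by (rule E_deriv_le)
    also have "\<dots> \<le> 2 * g t * E t"
      using norm_G_le_g[of t] t assms E_nonneg[of t] by (intro mult_right_mono) auto
    finally show "2 * (Y t \<bullet> (G t ** Y t)) - 2 * (Z t \<bullet> (G t ** Z t)) \<le> 2 * g t * E t" .
  qed
  then show ?thesis
    by (simp add: E_0 \<Gamma>_0)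
qed

lemma norm_Q_sq_le:
  assumes "0 \<le> t" "t \<le> T"
  shows "(norm (Q t))\<^sup>2 \<le> 2 * real CARD('n) * (exp (2 * \<Gamma> t) - 1)"
  using E_le[OF assms] norm_Q_sq[OF assms(1)] by (simp add: algebra_simps)

lemma offsupport_N_le:
  assumes "(i, j) \<notin> \<Omega>" "(j, i) \<notin> \<Omega>"
  shows "\<bar>N T $ i $ j\<bar> \<le> 4 * real CARD('n) * (exp (2 * \<Gamma> T) - 1) * \<Gamma> T"
proof -
  define C where "C = 4 * real CARD('n) * (exp (2 * \<Gamma> T) - 1)"
  have "\<bar>(\<lambda>t. N t $ i $ j) T - (\<lambda>t. N t $ i $ j) 0\<bar> \<le> (\<lambda>t. C * \<Gamma> t) T - (\<lambda>t. C * \<Gamma> t) 0"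
  proof (rule DERIV_abs_le_imp_abs_diff_le[OF T_nonneg])
    fix t
    assume t: "0 \<le> t" "t \<le> T"
    show "((\<lambda>t. N t $ i $ j) has_real_derivative (- (M t ** G t + G t ** M t)) $ i $ j)
        (at t within {0..})"
      unfolding has_real_derivative_iff_has_vector_derivative
      by (rule bounded_linear.has_vector_derivative[OF bounded_linear_matrix_nth N_has_derivative[OF t(1)]])
    show "((\<lambda>t. C * \<Gamma> t) has_real_derivative C * g t) (at t within {0..})"
      using \<Gamma>_has_derivative[OF t] by (auto intro!: derivative_eq_intros)
    have "(norm (Q t))\<^sup>2 \<le> 2 * real CARD('n) * (exp (2 * \<Gamma> t) - 1)"
      by (rule norm_Q_sq_le[OF t])
    also have "\<dots> \<le> 2 * real CARD('n) * (exp (2 * \<Gamma> T) - 1)"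
      using \<Gamma>_mono[OF t order_refl] by (intro mult_left_mono diff_right_mono) auto
    finally have Q_le: "(norm (Q t))\<^sup>2 \<le> 2 * real CARD('n) * (exp (2 * \<Gamma> T) - 1)" .
    have "0 \<le> g t"
      using norm_G_le_g[OF t] norm_ge_zero[of "G t"] by linarith
    then have "2 * norm (G t) * (norm (Q t))\<^sup>2 \<le> 2 * g t * (2 * real CARD('n) * (exp (2 * \<Gamma> T) - 1))"
      using norm_G_le_g[OF t] Q_le by (intro mult_mono) auto
    then show "\<bar>(- (M t ** G t + G t ** M t)) $ i $ j\<bar> \<le> C * g t"
      using offsupport_anticommutator_le[OF t(1) assms] by (simp add: C_def algebra_simps)
  qed
  then show ?thesis
    by (simp add: N_0 \<Gamma>_0 C_def)
qed

end

section \<open>Behaviour at the stopping time\<close>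

definition "stopping_time c = (1 - c) / lam * ln \<alpha>"

definition "norm_G_majorant T s = sqrt 8 / nobs * sqrt K * (exp (- \<rho> T * s) + lam / \<rho> T)"

definition "norm_G_majorant_integral T s = sqrt 8 / nobs * sqrt K / \<rho> T * (lam * s + 1 - exp (- \<rho> T * s))"

lemma norm_G_le_majorant:
  assumes "0 \<le> s" "s \<le> T"
  shows "norm (G s) \<le> norm_G_majorant T s"
proof -
  have "exp (- 2 * \<rho> T * s) = (exp (- \<rho> T * s))\<^sup>2"
    by (simp add: exp_double[symmetric])
  then have "sqrt (exp (- 2 * \<rho> T * s) + (lam / \<rho> T)\<^sup>2) \<le> exp (- \<rho> T * s) + lam / \<rho> T"
    using sqrt_add_le_add_sqrt[of "(exp (- \<rho> T * s))\<^sup>2" "(lam / \<rho> T)\<^sup>2"] lam_pos \<rho>_pos[of T]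
    by simp
  then have "sqrt (K * (exp (- 2 * \<rho> T * s) + (lam / \<rho> T)\<^sup>2))
      \<le> sqrt K * (exp (- \<rho> T * s) + lam / \<rho> T)"
    unfolding real_sqrt_mult by (rule mult_left_mono) (simp add: weighted_sq_norm_nonneg)
  then have "sqrt (\<Phi> s) \<le> sqrt K * (exp (- \<rho> T * s) + lam / \<rho> T)"
    using \<Phi>_le[OF assms] order_trans real_sqrt_le_mono by blast
  then have "sqrt 8 / nobs * sqrt (\<Phi> s)
      \<le> sqrt 8 / nobs * (sqrt K * (exp (- \<rho> T * s) + lam / \<rho> T))"
    using nobs_pos by (intro mult_left_mono) auto
  then show ?thesis
    using norm_G_le[of s] by (simp add: norm_G_majorant_def mult.assoc)
qed

lemma norm_G_majorant_integral_has_derivative: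
  "(norm_G_majorant_integral T has_real_derivative norm_G_majorant T s) (at s within S)"
  unfolding norm_G_majorant_integral_def[abs_def] norm_G_majorant_def
  by (rule derivative_eq_intros refl)+ (use \<rho>_pos[of T] \<Omega>_nonempty in \<open>simp add: field_simps\<close>)

lemma stopping_time_nonneg: "1 < \<alpha> \<Longrightarrow> c < 1 \<Longrightarrow> 0 \<le> stopping_time c"
  using lam_pos by (simp add: stopping_time_def)

lemma \<beta>_stopping_time: "\<beta> (stopping_time c) = \<alpha> powr (2 * c)"
proof -
  have "- 2 * lam * stopping_time c = (2 * c - 2) * ln \<alpha>"
    using lam_pos by (simp add: stopping_time_def field_simps)
  then have "exp (- 2 * lam * stopping_time c) = \<alpha> powr (2 * c - 2)"
    using \<alpha>_pos by (simp add: powr_def)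
  then show ?thesis
    using \<alpha>_pos by (simp add: \<beta>_def powr_diff)
qed

lemma \<rho>_stopping_time: "\<rho> (stopping_time c) = 4 * \<alpha> powr (2 * c) / nobs"
  by (simp add: \<rho>_def \<beta>_stopping_time)

lemma lam_mult_stopping_time: "lam * stopping_time c = (1 - c) * ln \<alpha>"
  using lam_pos by (simp add: stopping_time_def)

lemma observed_error_sq_at_stopping_time:
  assumes "1 < \<alpha>" "lam \<le> C" "0 < c" "c < 1" and obs: "(i, j) \<in> \<Omega> \<or> (j, i) \<in> \<Omega>"
  shows "(W (stopping_time c) $ i $ j - Xs $ i $ j)\<^sup>2 \<le> K *
    (exp (- (8 * (1 - c) / (nobs * C)) * (\<alpha> powr (2 * c) * ln \<alpha>)) + (nobs * C / 4)\<^sup>2 * \<alpha> powr (- 4 * c))"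
proof -
  let ?T = "stopping_time c"
  have ln: "0 < ln \<alpha>"
    using assms(1) by simp
  have "(W ?T $ i $ j - Xs $ i $ j)\<^sup>2 \<le> \<Phi> ?T"
    using sq_nth_le_weighted_sq_norm[OF obs, of "W ?T - Xs"] by (simp add: \<Phi>_def)
  also have "\<dots> \<le> K * (exp (- 2 * \<rho> ?T * ?T) + (lam / \<rho> ?T)\<^sup>2)"
    using stopping_time_nonneg assms by (intro \<Phi>_le) auto
  also have "\<dots> \<le> K * (exp (- (8 * (1 - c) / (nobs * C)) * (\<alpha> powr (2 * c) * ln \<alpha>))
      + (nobs * C / 4)\<^sup>2 * \<alpha> powr (- 4 * c))"
  proof (intro mult_left_mono add_mono weighted_sq_norm_nonneg)
    have "8 * (1 - c) / (nobs * C) * (\<alpha> powr (2 * c) * ln \<alpha>)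
        \<le> 8 * (1 - c) / (nobs * lam) * (\<alpha> powr (2 * c) * ln \<alpha>)"
      using assms(2,4) lam_pos nobs_pos ln
      by (intro mult_right_mono divide_left_mono mult_left_mono) auto
    also have "\<dots> = 2 * \<rho> ?T * ?T"
      unfolding \<rho>_stopping_time using lam_pos nobs_pos by (simp add: stopping_time_def field_simps)
    finally show "exp (- 2 * \<rho> ?T * ?T) \<le> exp (- (8 * (1 - c) / (nobs * C)) * (\<alpha> powr (2 * c) * ln \<alpha>))"
      by simp
    have "lam / \<rho> ?T \<le> nobs * C / 4 * \<alpha> powr (- 2 * c)"
      using assms(2) nobs_pos \<alpha>_pos by (simp add: \<rho>_stopping_time powr_minus field_simps)
    then have "(lam / \<rho> ?T)\<^sup>2 \<le> (nobs * C / 4 * \<alpha> powr (- 2 * c))\<^sup>2"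
      using lam_pos \<rho>_pos[of ?T] by (intro power_mono) auto
    also have "\<dots> = (nobs * C / 4)\<^sup>2 * \<alpha> powr (- 4 * c)"
    proof -
      have "- 4 * c = - 2 * c + - 2 * c"
        by simp
      then show ?thesis
        by (simp only: power_mult_distrib powr_add power2_eq_square mult_ac)
    qed
    finally show "(lam / \<rho> ?T)\<^sup>2 \<le> (nobs * C / 4)\<^sup>2 * \<alpha> powr (- 4 * c)" .
  qed
  finally show ?thesis .
qed

lemma norm_G_majorant_integral_nonneg:
  assumes "0 \<le> s"
  shows "0 \<le> norm_G_majorant_integral T s"
proof -
  have "exp (- \<rho> T * s) \<le> 1"
    using \<rho>_pos[of T] assms by simp
  moreover have "0 \<le> lam * s"
    using lam_pos assms by simp
  moreover have "0 \<le> sqrt 8 / nobs * sqrt K / \<rho> T"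
    using nobs_pos \<rho>_pos[of T] weighted_sq_norm_nonneg[of \<Omega> Xs] by simp
  ultimately show ?thesis
    unfolding norm_G_majorant_integral_def by (intro mult_nonneg_nonneg) linarith+
qed

lemma norm_G_majorant_integral_stopping_time_le:
  assumes "1 < \<alpha>" "0 < c" "c < 1"
  shows "norm_G_majorant_integral (stopping_time c) (stopping_time c)
    \<le> sqrt K * (ln \<alpha> + 1) / \<alpha> powr (2 * c)"
proof -
  let ?T = "stopping_time c"
  define \<kappa> where "\<kappa> = sqrt 8 / nobs * sqrt K / \<rho> ?T"
  have ln: "0 < ln \<alpha>"
    using assms(1) by simp
  have "0 \<le> \<kappa>"
    using nobs_pos \<rho>_pos[of ?T] weighted_sq_norm_nonneg[of \<Omega> Xs] by (simp add: \<kappa>_def)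
  then have "norm_G_majorant_integral ?T ?T \<le> \<kappa> * (lam * ?T + 1)"
    unfolding norm_G_majorant_integral_def \<kappa>_def[symmetric] by (intro mult_left_mono) simp_all
  also have "\<dots> = sqrt 8 / 4 * sqrt K * ((1 - c) * ln \<alpha> + 1) / \<alpha> powr (2 * c)"
    unfolding \<kappa>_def \<rho>_stopping_time lam_mult_stopping_time using \<Omega>_nonempty \<alpha>_pos
    by (simp add: field_simps)
  also have "\<dots> \<le> sqrt K * (ln \<alpha> + 1) / \<alpha> powr (2 * c)"
  proof -
    have "sqrt 8 \<le> 4"
      by (rule real_le_lsqrt) simp_all
    then have "sqrt 8 / 4 * sqrt K \<le> sqrt K"
      using weighted_sq_norm_nonneg[of \<Omega> Xs] by (intro mult_left_le_one_le) auto
    moreover have "0 \<le> (1 - c) * ln \<alpha>" "0 \<le> c * ln \<alpha>"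
      using assms(2,3) ln by simp_all
    then have "0 \<le> (1 - c) * ln \<alpha> + 1" "(1 - c) * ln \<alpha> + 1 \<le> ln \<alpha> + 1"
      by (simp_all add: algebra_simps)
    ultimately show ?thesis
      using weighted_sq_norm_nonneg[of \<Omega> Xs] by (intro divide_right_mono mult_mono) auto
  qed
  finally show ?thesis .
qed

lemma unobserved_entry_at_stopping_time:
  assumes "1 < \<alpha>" "0 < c" "c < 1" and unobs: "(i, j) \<notin> \<Omega>" "(j, i) \<notin> \<Omega>"
  shows "\<bar>W (stopping_time c) $ i $ j\<bar> \<le> 4 * real CARD('n) * \<alpha> powr (2 * c)
    * (exp (2 * (sqrt K * (ln \<alpha> + 1) / \<alpha> powr (2 * c))) - 1) * (sqrt K * (ln \<alpha> + 1) / \<alpha> powr (2 * c))"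
proof -
  let ?T = "stopping_time c" and ?\<Gamma> = "norm_G_majorant_integral (stopping_time c)"
  have T: "0 \<le> ?T"
    using stopping_time_nonneg assms by auto
  have "\<bar>N ?T $ i $ j\<bar> \<le> 4 * real CARD('n) * (exp (2 * ?\<Gamma> ?T) - 1) * ?\<Gamma> ?T"
    by (rule offsupport_N_le[OF T norm_G_le_majorant norm_G_majorant_integral_has_derivative _ unobs])
       (simp_all add: norm_G_majorant_integral_def)
  also have "\<dots> \<le> 4 * real CARD('n) * (exp (2 * (sqrt K * (ln \<alpha> + 1) / \<alpha> powr (2 * c))) - 1)
      * (sqrt K * (ln \<alpha> + 1) / \<alpha> powr (2 * c))"
    using norm_G_majorant_integral_nonneg[OF T, of "stopping_time c"]
      norm_G_majorant_integral_stopping_time_le[OF assms(1-3)]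
    by (intro mult_mono mult_left_mono) auto
  finally have N_le: "\<bar>N ?T $ i $ j\<bar> \<le> \<dots>" .
  have "\<bar>W ?T $ i $ j\<bar> = \<alpha> powr (2 * c) * \<bar>N ?T $ i $ j\<bar>"
    by (simp add: W_eq \<beta>_stopping_time abs_mult)
  also have "\<dots> \<le> \<alpha> powr (2 * c) * (4 * real CARD('n)
      * (exp (2 * (sqrt K * (ln \<alpha> + 1) / \<alpha> powr (2 * c))) - 1) * (sqrt K * (ln \<alpha> + 1) / \<alpha> powr (2 * c)))"
    using N_le by (intro mult_left_mono) simp_all
  finally show ?thesis
    by (simp only: mult_ac)
qed

end

lemma tendsto_zero_if_sq_le:
  fixes f b :: "'a \<Rightarrow> real"
  assumes "eventually (\<lambda>x. (f x)\<^sup>2 \<le> b x) F" and "(b \<longlongrightarrow> 0) F"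
  shows "(f \<longlongrightarrow> 0) F"
proof (rule Lim_null_comparison)
  show "eventually (\<lambda>x. norm (f x) \<le> sqrt (b x)) F"
    using assms(1) by eventually_elim (rule real_le_rsqrt, simp)
  show "((\<lambda>x. sqrt (b x)) \<longlongrightarrow> 0) F"
    using tendsto_real_sqrt[OF assms(2)] by simp
qed

lemma observed_entry_tendsto:
  fixes Xs :: "real^'n::finite^'n"
  assumes flows: "\<And>\<alpha>. 1 < \<alpha> \<Longrightarrow> completion_flow Xs \<Omega> (lam \<alpha>) \<alpha> (flow \<alpha>)"
    and lam_le: "eventually (\<lambda>\<alpha>. lam \<alpha> \<le> C) at_top" and "0 < C"
    and c: "0 < c" "c < 1" and obs: "(i, j) \<in> \<Omega> \<or> (j, i) \<in> \<Omega>"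
  shows "((\<lambda>\<alpha>. Wmat (flow \<alpha> ((1 - c) / lam \<alpha> * ln \<alpha>)) $ i $ j) \<longlongrightarrow> Xs $ i $ j) at_top"
proof -
  define n where "n = real (card \<Omega>)"
  define b where "b \<alpha> = weighted_sq_norm \<Omega> Xs *
    (exp (- (8 * (1 - c) / (n * C)) * (\<alpha> powr (2 * c) * ln \<alpha>)) + (n * C / 4)\<^sup>2 * \<alpha> powr (- 4 * c))"
    for \<alpha>
  have "completion_flow Xs \<Omega> (lam 2) 2 (flow 2)"
    by (rule flows) simp
  from completion_flow.nobs_pos[OF this] have n: "0 < n"
    by (simp add: n_def)
  have "((\<lambda>\<alpha>. exp (- (8 * (1 - c) / (n * C)) * (\<alpha> powr (2 * c) * ln \<alpha>))) \<longlongrightarrow> 0) at_top"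
    using c n \<open>0 < C\<close> by real_asymp
  moreover have "((\<lambda>\<alpha>::real. \<alpha> powr (- 4 * c)) \<longlongrightarrow> 0) at_top"
    using c by real_asymp
  ultimately have b_lim: "(b \<longlongrightarrow> 0) at_top"
    unfolding b_def by (auto intro!: tendsto_mult_right_zero tendsto_add_zero tendsto_mult_left_zero)
  have bound: "eventually (\<lambda>\<alpha>. (Wmat (flow \<alpha> ((1 - c) / lam \<alpha> * ln \<alpha>)) $ i $ j - Xs $ i $ j)\<^sup>2 \<le> b \<alpha>)
      at_top"
    using lam_le eventually_gt_at_top[of 1]
  proof eventually_elim
    case (elim \<alpha>)
    interpret completion_flow Xs \<Omega> "lam \<alpha>" \<alpha> "flow \<alpha>"
      using flows elim(2) .
    show ?case
      using observed_error_sq_at_stopping_time[OF elim(2) elim(1) c obs]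
      by (simp add: W_def stopping_time_def b_def n_def)
  qed
  have "((\<lambda>\<alpha>. Wmat (flow \<alpha> ((1 - c) / lam \<alpha> * ln \<alpha>)) $ i $ j - Xs $ i $ j) \<longlongrightarrow> 0) at_top"
    using bound b_lim by (rule tendsto_zero_if_sq_le)
  then show ?thesis
    by (rule LIM_zero_cancel)
qed

lemma unobserved_entry_tendsto:
  fixes Xs :: "real^'n::finite^'n"
  assumes flows: "\<And>\<alpha>. 1 < \<alpha> \<Longrightarrow> completion_flow Xs \<Omega> (lam \<alpha>) \<alpha> (flow \<alpha>)"
    and c: "0 < c" "c < 1" and unobs: "(i, j) \<notin> \<Omega>" "(j, i) \<notin> \<Omega>"
  shows "((\<lambda>\<alpha>. Wmat (flow \<alpha> ((1 - c) / lam \<alpha> * ln \<alpha>)) $ i $ j) \<longlongrightarrow> 0) at_top"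
proof -
  define k where "k = sqrt (weighted_sq_norm \<Omega> Xs)"
  define b where "b \<alpha> = 4 * real CARD('n) * \<alpha> powr (2 * c)
    * (exp (2 * (k * (ln \<alpha> + 1) / \<alpha> powr (2 * c))) - 1) * (k * (ln \<alpha> + 1) / \<alpha> powr (2 * c))" for \<alpha>
  have "0 \<le> k"
    by (simp add: k_def weighted_sq_norm_nonneg)
  then have "(b \<longlongrightarrow> 0) at_top"
    unfolding b_def using c by real_asymp
  moreover have "eventually (\<lambda>\<alpha>. norm (Wmat (flow \<alpha> ((1 - c) / lam \<alpha> * ln \<alpha>)) $ i $ j) \<le> b \<alpha>) at_top"
    using eventually_gt_at_top[of 1]
  proof eventually_elim
    case (elim \<alpha>)
    interpret completion_flow Xs \<Omega> "lam \<alpha>" \<alpha> "flow \<alpha>"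
      using flows elim .
    show ?case
      using unobserved_entry_at_stopping_time[OF elim c unobs]
      by (simp add: W_def stopping_time_def b_def k_def)
  qed
  ultimately show ?thesis
    by (rule Lim_null_comparison[rotated])
qed

theorem corollary3p3:
  fixes Xs :: "real^'n::finite^'n"
    and \<Omega> :: "('n \<times> 'n) set"
    and lam :: "real \<Rightarrow> real"
    and p c :: real
    and flow :: "real \<Rightarrow> real \<Rightarrow> 'n params"
    and i j :: 'n
  assumes sym: "transpose Xs = Xs"
    and \<Omega>_ne: "\<Omega> \<noteq> {}"
    and p_pos: "p > 0"
    and lam_pos: "\<forall>\<alpha>>0. lam \<alpha> > 0"
    and lam_Theta: "lam \<in> \<Theta>[at_top](\<lambda>\<alpha>. \<alpha> powr (- p))"
    and flow: "\<forall>\<alpha>>0. is_gradient_flow (loss Xs \<Omega> (lam \<alpha>))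
                         (mat \<alpha>, mat \<alpha>) (flow \<alpha>)"
    and c: "0 < c" "c < 1"
  shows "((\<lambda>\<alpha>. Wmat (flow \<alpha> ((1 - c) / lam \<alpha> * ln \<alpha>)) $ i $ j)
            \<longlongrightarrow> (if (i, j) \<in> \<Omega> \<or> (j, i) \<in> \<Omega> then Xs $ i $ j else 0)) at_top"
proof -
  have flows: "completion_flow Xs \<Omega> (lam \<alpha>) \<alpha> (flow \<alpha>)" if "1 < \<alpha>" for \<alpha>
    using that sym \<Omega>_ne lam_pos flow by unfold_locales auto
  \<comment> \<open>Only the upper bound \<open>lam = O(1)\<close> is used.\<close>
  have "(\<lambda>\<alpha>. \<alpha> powr (- p)) \<in> O[at_top](\<lambda>_. 1)"
    using p_pos by real_asymp
  with bigthetaD1[OF lam_Theta] have "lam \<in> O[at_top](\<lambda>_. 1)"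
    by (rule landau_o.big_trans)
  then obtain C where "0 < C" and "eventually (\<lambda>\<alpha>. norm (lam \<alpha>) \<le> C * norm (1::real)) at_top"
    by (elim landau_o.bigE)
  then have lam_le: "eventually (\<lambda>\<alpha>. lam \<alpha> \<le> C) at_top"
    by (auto elim: eventually_mono)
  show ?thesis
    using observed_entry_tendsto[OF flows lam_le \<open>0 < C\<close> c] unobserved_entry_tendsto[OF flows c]
    by auto
qed

end
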